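(* Let $\lambda_1\ge\lambda_2\ge1$ with either $\lambda_1-\lambda_2=1$ or $\lambda_1-\lambda_2\ge 3$, and let $n=\lambda_1+\lambda_2$. Let $(\mu_1,\mu_2)$ be a partition of $n$ with $\mu_1\ge\mu_2\ge1$. Then there exist commuting nilpotent $n\times n$ matrices $B,A$ with $\mathrm{sh}(B)=(\lambda_1,\lambda_2)$ and $\mathrm{sh}(A)=(\mu_1,\mu_2)$ if and only if $(\mu_1,\mu_2)=(\lambda_1,\lambda_2)$.
   Context: $\mathbb{F}$ is an algebraically closed field of characteristic $0$ and matrices are over $\mathbb{F}$. For a nilpotent matrix $A$, $\mathrm{sh}(A)$ is the partition of $n$ given by the sizes of the Jordan blocks of its Jordan canonical form. *)

theory Defs
  imports "Jordan_Normal_Form.Jordan_Normal_Form" "HOL-Computational_Algebra.Polynomial"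
    "HOL-Library.Multiset"
begin

definition nilpotent_mat :: "'a :: semiring_1 mat \<Rightarrow> bool" where
  "nilpotent_mat A \<longleftrightarrow> (\<exists>k. A ^\<^sub>m k = 0\<^sub>m (dim_row A) (dim_col A))"

definition jordan_shape :: "'a :: semiring_1 mat \<Rightarrow> nat multiset \<Rightarrow> bool" where
  "jordan_shape A P \<longleftrightarrow> (\<exists>n_as. jordan_nf A n_as \<and> mset (map fst n_as) = P)"

end

theory Submission
  imports Defs "Jordan_Normal_Form.Jordan_Normal_Form_Uniqueness"
begin

(* Let B be nilpotent with Jordan blocks of sizes p and q, where p \<ge> q + 3, and let A be a
   nilpotent matrix commuting with B whose Jordan form also has (at most) two blocks.  Then
   the largest block of A has size exactly p.  This yields the theorem: if l1 - l2 \<ge> 3 we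
   apply the claim to (B, A); if l1 - l2 = 1 and m1 - m2 \<ge> 3 we apply it to (A, B); in the
   remaining case m1 - m2 \<le> 2 and m1 + m2 = 2 l2 + 1 is odd, forcing m1 - m2 = 1.  The
   converse direction is witnessed by B = A = the Jordan matrix itself.

   To prove the claim, F^n is identified with the F[t]-module F[t]/(t^p) \<oplus> F[t]/(t^q),
   on which B acts as multiplication by t (locale two_chains).  A commutes with B, so it
   is a module endomorphism, determined by the images (a, c) and (s, d) of the two
   generators; its powers act on coordinate pairs by iterating endo_step.  Commutation
   forces t^(p-q) | s, nilpotency forces a(0) = d(0) = 0; this already gives A^p = 0.  If
   moreover the coefficient of t in a vanished, the kernel of A would be 3-dimensional,
   contradicting that A has only two Jordan blocks; hence a = \<alpha> t + ... with \<alpha> \<noteq> 0, and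
   A^(p-1) maps the first generator to \<alpha>^(p-1) t^(p-1) + ... \<noteq> 0. *)

abbreviation tpow :: "nat \<Rightarrow> 'a::field poly" where
  "tpow k \<equiv> monom 1 k"

lemma tpow_dvd_mult_cancel: "tpow (j + i) dvd tpow j * h \<longleftrightarrow> tpow i dvd (h::'a::field poly)"
  by (auto simp: monom_1_dvd_iff' coeff_monom_mult)
    (metis add.commute add_diff_cancel_left' less_diff_conv2 le_add1)

lemma tpow_dvd_mult: "tpow i dvd f \<Longrightarrow> tpow j dvd g \<Longrightarrow> tpow (i + j) dvd (f * g::'a::field poly)"
  by (metis mult_dvd_mono mult_monom mult_1)

lemma tpow_dvd_mono: "i \<le> j \<Longrightarrow> tpow j dvd f \<Longrightarrow> tpow i dvd (f::'a::field poly)"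
  by (auto simp: monom_1_dvd_iff')

lemma tpow_dvd_monom: "tpow k dvd (monom c k :: 'a::field poly)"
  by (auto simp: monom_1_dvd_iff' coeff_monom)

section \<open>Endomorphisms of a free module of rank two over F[t]\<close>

(* The F[t]-linear map sending the generators to (a, c) and (s, d), acting on a coordinate
   pair (f, g).  Iterating it describes the powers of a matrix commuting with B. *)
definition endo_step :: "'a::field poly \<Rightarrow> 'a poly \<Rightarrow> 'a poly \<Rightarrow> 'a poly \<Rightarrow>
    'a poly \<times> 'a poly \<Rightarrow> 'a poly \<times> 'a poly" where
  "endo_step a c s d x = (fst x * a + snd x * s, fst x * c + snd x * d)"

(* If a, d \<in> (t) and s \<in> (t^2), the k-th iterate lands in (t^k) \<oplus> (t^(k-1)).
   This is the source of the upper bound A^p = 0. *)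
lemma endo_iter_divisible:
  fixes a c s d :: "'a::field poly"
  assumes a: "tpow 1 dvd a" and d: "tpow 1 dvd d" and s: "tpow 2 dvd s"
  shows "tpow k dvd fst ((endo_step a c s d ^^ k) x) \<and>
         tpow k dvd tpow 1 * snd ((endo_step a c s d ^^ k) x)"
proof (induction k)
  case 0
  then show ?case by simp
next
  case (Suc k)
  define f where "f = fst ((endo_step a c s d ^^ k) x)"
  define g where "g = snd ((endo_step a c s d ^^ k) x)"
  have f: "tpow k dvd f" and g: "tpow k dvd tpow 1 * g" using Suc by (auto simp: f_def g_def)
  have step: "(endo_step a c s d ^^ Suc k) x = (f * a + g * s, f * c + g * d)"
    by (simp add: endo_step_def f_def g_def)
  have fa: "tpow (Suc k) dvd f * a" using tpow_dvd_mult[OF f a] by simp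
  have "tpow (k + 2) dvd (tpow 1 * g) * s" using tpow_dvd_mult[OF g s] by simp
  hence "tpow (1 + Suc k) dvd tpow 1 * (g * s)" by (simp add: mult.assoc)
  hence gs: "tpow (Suc k) dvd g * s" using tpow_dvd_mult_cancel by blast
  have "tpow (1 + k) dvd tpow 1 * f" using tpow_dvd_mult[OF dvd_refl f] .
  hence fc: "tpow (Suc k) dvd (tpow 1 * f) * c" by (simp add: dvd_mult2)
  have gd: "tpow (Suc k) dvd (tpow 1 * g) * d" using tpow_dvd_mult[OF g d] by simp
  have "tpow 1 * (f * c + g * d) = (tpow 1 * f) * c + (tpow 1 * g) * d" by (simp add: algebra_simps)
  with fa gs fc gd show ?case unfolding step by auto
qed

lemma endo_iter_leading_term:
  fixes a c s d :: "'a::field poly"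
  assumes a0: "coeff a 0 = 0" and d: "tpow 1 dvd d" and s: "tpow 3 dvd s"
  shows "tpow (Suc k) dvd fst ((endo_step a c s d ^^ k) (1, 0)) - monom (coeff a 1 ^ k) k
     \<and> tpow k dvd tpow 1 * snd ((endo_step a c s d ^^ k) (1, 0))"
proof (induction k)
  case 0
  then show ?case by (simp add: monom_0 one_pCons)
next
  case (Suc k)
  define f where "f = fst ((endo_step a c s d ^^ k) (1, 0))"
  define g where "g = snd ((endo_step a c s d ^^ k) (1, 0))"
  define \<alpha> where "\<alpha> = coeff a 1"
  define E where "E = f - monom (\<alpha> ^ k) k"
  have E: "tpow (Suc k) dvd E" and g: "tpow k dvd tpow 1 * g"
    using Suc by (auto simp: f_def g_def E_def \<alpha>_def)
  have step: "(endo_step a c s d ^^ Suc k) (1, 0) = (f * a + g * s, f * c + g * d)"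
    by (simp add: endo_step_def f_def g_def)
  have a1: "tpow 1 dvd a" using a0 by (auto simp: monom_1_dvd_iff')
  have a2: "tpow 2 dvd a - monom \<alpha> 1"
    using a0 by (auto simp: monom_1_dvd_iff' \<alpha>_def less_2_cases_iff)
  have first: "f * a + g * s - monom (\<alpha> ^ Suc k) (Suc k)
      = E * a + monom (\<alpha> ^ k) k * (a - monom \<alpha> 1) + g * s"
    by (simp add: E_def algebra_simps mult_monom)
  have Ea: "tpow (Suc (Suc k)) dvd E * a" using tpow_dvd_mult[OF E a1] by simp
  have "tpow (Suc (Suc k)) dvd monom (\<alpha> ^ k) k * (a - monom \<alpha> 1)"
    using tpow_dvd_mult[OF tpow_dvd_monom a2] by simp
  moreover have "tpow (k + 3) dvd (tpow 1 * g) * s" using tpow_dvd_mult[OF g s] by simp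
  hence "tpow (1 + Suc (Suc k)) dvd tpow 1 * (g * s)" by (simp add: mult.assoc numeral_3_eq_3)
  hence "tpow (Suc (Suc k)) dvd g * s" using tpow_dvd_mult_cancel by blast
  ultimately have fst_ok: "tpow (Suc (Suc k)) dvd f * a + g * s - monom (\<alpha> ^ Suc k) (Suc k)"
    unfolding first using Ea by (intro dvd_add) auto
  have "tpow k dvd E" using tpow_dvd_mono[OF _ E] by simp
  from dvd_add[OF this tpow_dvd_monom[of k "\<alpha> ^ k"]] have "tpow k dvd f" unfolding E_def by simp
  hence "tpow (1 + k) dvd tpow 1 * f" using tpow_dvd_mult[OF dvd_refl] by blast
  hence "tpow (Suc k) dvd (tpow 1 * f) * c" by (simp add: dvd_mult2)
  moreover have "tpow (Suc k) dvd (tpow 1 * g) * d" using tpow_dvd_mult[OF g d] by simp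
  moreover have "tpow 1 * (f * c + g * d) = (tpow 1 * f) * c + (tpow 1 * g) * d"
    by (simp add: algebra_simps)
  ultimately have snd_ok: "tpow (Suc k) dvd tpow 1 * (f * c + g * d)" by simp
  show ?case unfolding step fst_conv snd_conv \<alpha>_def[symmetric] using fst_ok snd_ok by blast
qed

lemma endo_iter_not_divisible:
  fixes a c s d :: "'a::field poly"
  assumes a0: "coeff a 0 = 0" and d: "tpow 1 dvd d" and s: "tpow 3 dvd s"
    and a1: "coeff a 1 \<noteq> 0"
  shows "\<not> tpow (Suc k) dvd fst ((endo_step a c s d ^^ k) (1, 0))"
proof
  assume "tpow (Suc k) dvd fst ((endo_step a c s d ^^ k) (1, 0))"
  from dvd_diff[OF this conjunct1[OF endo_iter_leading_term[OF a0 d s, where c = c and k = k]]]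
  have "tpow (Suc k) dvd monom (coeff a 1 ^ k) k" by simp
  hence "coeff (monom (coeff a 1 ^ k) k) k = 0" by (auto simp: monom_1_dvd_iff')
  with a1 show False by simp
qed

(* Constant terms of the iterates: when s(0) = 0 the map is triangular modulo t. *)
lemma endo_iter_const_first:
  fixes a c s d :: "'a::field poly"
  assumes "coeff s 0 = 0"
  shows "coeff (fst ((endo_step a c s d ^^ k) (1, 0))) 0 = coeff a 0 ^ k"
  by (induction k) (auto simp: endo_step_def coeff_mult_0 assms)

lemma endo_iter_const_second:
  fixes a c s d :: "'a::field poly"
  assumes "coeff s 0 = 0"
  shows "coeff (snd ((endo_step a c s d ^^ k) (0, 1))) 0 = coeff d 0 ^ k"
proof -
  have "coeff (fst ((endo_step a c s d ^^ k) (0, 1))) 0 = 0 \<and>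
        coeff (snd ((endo_step a c s d ^^ k) (0, 1))) 0 = coeff d 0 ^ k"
    by (induction k) (auto simp: endo_step_def coeff_mult_0 assms)
  thus ?thesis ..
qed

lemma zero_matI:
  fixes M :: "'a::field mat"
  assumes M: "M \<in> carrier_mat n n" and kills: "\<And>v. v \<in> carrier_vec n \<Longrightarrow> M *\<^sub>v v = 0\<^sub>v n"
  shows "M = 0\<^sub>m n n"
proof (rule eq_matI)
  fix i j assume i: "i < dim_row (0\<^sub>m n n :: 'a mat)" and j: "j < dim_col (0\<^sub>m n n :: 'a mat)"
  have "M $$ (i, j) = row M i \<bullet> col (1\<^sub>m n) j" using M i j by simp
  also have "\<dots> = (M *\<^sub>v unit_vec n j) $ i" using M i j by simp
  also have "\<dots> = 0" using kills[of "unit_vec n j"] i by simp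
  finally show "M $$ (i, j) = 0\<^sub>m n n $$ (i, j)" using i j by simp
qed (use M in auto)

lemma kernel_dim_zero_mat: "kernel_dim (0\<^sub>m n n :: 'a::field mat) = n"
proof -
  have "jordan_block n (0::'a) ^\<^sub>m n = 0\<^sub>m n n"
    unfolding jordan_block_zero_pow by (intro eq_matI) auto
  moreover have "kernel.dim n (jordan_block n (0::'a) ^\<^sub>m n) = n"
    using dim_kernel_zero_jordan_block_pow[of n n] by simp
  ultimately show ?thesis unfolding kernel_dim_def by simp
qed

lemma pow_zero_mono:
  fixes X :: "'a::field mat"
  assumes X: "X \<in> carrier_mat n n" and K: "X ^\<^sub>m K = 0\<^sub>m n n" and le: "K \<le> j"
  shows "X ^\<^sub>m j = 0\<^sub>m n n"
  using le
proof (induction j)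
  case (Suc j)
  show ?case
  proof (cases "K \<le> j")
    case True
    then show ?thesis using Suc X by simp
  next
    case False
    then show ?thesis using Suc K by (simp add: le_Suc_eq)
  qed
qed (use K in simp)

lemma (in kernel) card_le_kernel_dim:
  assumes S: "S \<subseteq> mat_kernel A" and li: "NC.lin_indpt S"
  shows "card S \<le> kernel_dim A"
proof -
  obtain bas where "finite bas" "basis bas" using kernel_basis_exists[OF A] by auto
  hence "Ker.fin_dim" unfolding Ker.fin_dim_def Ker.basis_def by auto
  moreover have "lin_indpt S" using lindep_same[OF S] li by simp
  ultimately show ?thesis using Ker.li_le_dim(2)[OF _ S] by simp
qed

lemma (in vec_space) three_lin_indpt:
  assumes u: "u1 \<in> carrier_vec n" "u2 \<in> carrier_vec n" "u3 \<in> carrier_vec n"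
    and indep: "\<And>x y z. x \<cdot>\<^sub>v u1 + y \<cdot>\<^sub>v u2 + z \<cdot>\<^sub>v u3 = 0\<^sub>v n \<Longrightarrow> x = 0 \<and> y = 0 \<and> z = 0"
  shows "card {u1, u2, u3} = 3" and "lin_indpt {u1, u2, u3}"
proof -
  have "u1 \<noteq> u2"
  proof
    assume "u1 = u2"
    hence "1 \<cdot>\<^sub>v u1 + (-1) \<cdot>\<^sub>v u2 + 0 \<cdot>\<^sub>v u3 = 0\<^sub>v n" using u by (intro eq_vecI) auto
    from indep[OF this] show False by simp
  qed
  moreover have "u1 \<noteq> u3"
  proof
    assume "u1 = u3"
    hence "1 \<cdot>\<^sub>v u1 + 0 \<cdot>\<^sub>v u2 + (-1) \<cdot>\<^sub>v u3 = 0\<^sub>v n" using u by (intro eq_vecI) auto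
    from indep[OF this] show False by simp
  qed
  moreover have "u2 \<noteq> u3"
  proof
    assume "u2 = u3"
    hence "0 \<cdot>\<^sub>v u1 + 1 \<cdot>\<^sub>v u2 + (-1) \<cdot>\<^sub>v u3 = 0\<^sub>v n" using u by (intro eq_vecI) auto
    from indep[OF this] show False by simp
  qed
  ultimately have distinct: "u1 \<noteq> u2" "u1 \<noteq> u3" "u2 \<noteq> u3" by auto
  thus "card {u1, u2, u3} = 3" by simp
  show "lin_indpt {u1, u2, u3}"
  proof (rule finite_lin_indpt2, goal_cases)
    case (3 w)
    hence lc: "lincomb w {u1, u2, u3} = 0\<^sub>v n" by simp
    have "w u1 \<cdot>\<^sub>v u1 + w u2 \<cdot>\<^sub>v u2 + w u3 \<cdot>\<^sub>v u3 = 0\<^sub>v n"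
    proof (rule eq_vecI)
      fix i assume "i < dim_vec (0\<^sub>v n :: 'a vec)"
      hence i: "i < n" by simp
      have "0 = lincomb w {u1, u2, u3} $ i" using lc i by simp
      also have "\<dots> = (\<Sum>x\<in>{u1, u2, u3}. w x * x $ i)" by (rule lincomb_index[OF i]) (use u in auto)
      also have "\<dots> = w u1 * u1 $ i + w u2 * u2 $ i + w u3 * u3 $ i" using distinct by simp
      finally show "(w u1 \<cdot>\<^sub>v u1 + w u2 \<cdot>\<^sub>v u2 + w u3 \<cdot>\<^sub>v u3) $ i = 0\<^sub>v n $ i"
        using i u by (simp add: add.assoc)
    qed (use u in simp)
    from indep[OF this] show ?case by simp
  qed (use u in auto)
qed

lemma three_le_kernel_dim:
  fixes A :: "'a::field mat"
  assumes A: "A \<in> carrier_mat n n"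
    and u: "u1 \<in> carrier_vec n" "u2 \<in> carrier_vec n" "u3 \<in> carrier_vec n"
    and ker: "A *\<^sub>v u1 = 0\<^sub>v n" "A *\<^sub>v u2 = 0\<^sub>v n" "A *\<^sub>v u3 = 0\<^sub>v n"
    and indep: "\<And>x y z. x \<cdot>\<^sub>v u1 + y \<cdot>\<^sub>v u2 + z \<cdot>\<^sub>v u3 = 0\<^sub>v n \<Longrightarrow> x = 0 \<and> y = 0 \<and> z = 0"
  shows "3 \<le> kernel_dim A"
proof -
  interpret kernel n n A by unfold_locales (rule A)
  have "{u1, u2, u3} \<subseteq> mat_kernel A" using u ker A by (auto intro: mat_kernelI)
  from card_le_kernel_dim[OF this NC.three_lin_indpt(2)[OF u indep]]
  show ?thesis using NC.three_lin_indpt(1)[OF u indep] by simp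
qed

section \<open>The module model of a nilpotent matrix with two Jordan chains\<close>

(* phi identifies F^n with F[t]/(t^p) \<oplus> F[t]/(t^q): it is additive, F-linear, surjective,
   has kernel (t^p) \<oplus> (t^q), and turns multiplication by t into the action of B. *)
locale two_chains =
  fixes B :: "'a::field mat" and n p q :: nat and \<phi> :: "'a poly \<Rightarrow> 'a poly \<Rightarrow> 'a vec"
  assumes B: "B \<in> carrier_mat n n"
    and phi_carrier: "\<And>f g. \<phi> f g \<in> carrier_vec n"
    and phi_add: "\<And>f g h k. \<phi> (f + h) (g + k) = \<phi> f g + \<phi> h k"
    and phi_smult: "\<And>c f g. \<phi> (Polynomial.smult c f) (Polynomial.smult c g) = c \<cdot>\<^sub>v \<phi> f g"
    and phi_shift: "\<And>f g. B *\<^sub>v \<phi> f g = \<phi> (pCons 0 f) (pCons 0 g)"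
    and phi_eq_zero: "\<And>f g. \<phi> f g = 0\<^sub>v n \<longleftrightarrow> tpow p dvd f \<and> tpow q dvd g"
    and phi_surj: "\<And>v. v \<in> carrier_vec n \<Longrightarrow> \<exists>f g. v = \<phi> f g"
begin

lemma phi_split: "\<phi> f g = \<phi> f 0 + \<phi> 0 g"
  using phi_add[of f 0 0 g] by simp

lemma phi_pCons:
  "\<phi> (pCons x f) 0 = x \<cdot>\<^sub>v \<phi> 1 0 + B *\<^sub>v \<phi> f 0"
  "\<phi> 0 (pCons x g) = x \<cdot>\<^sub>v \<phi> 0 1 + B *\<^sub>v \<phi> 0 g"
proof -
  have split: "pCons x h = Polynomial.smult x 1 + pCons 0 h" for h :: "'a poly"
    by (simp add: one_pCons)
  have "\<phi> (pCons x f) 0 = \<phi> (Polynomial.smult x 1 + pCons 0 f) (Polynomial.smult x 0 + pCons 0 0)"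
    using split[of f] by simp
  thus "\<phi> (pCons x f) 0 = x \<cdot>\<^sub>v \<phi> 1 0 + B *\<^sub>v \<phi> f 0" by (simp only: phi_add phi_smult phi_shift)
  have "\<phi> 0 (pCons x g) = \<phi> (Polynomial.smult x 0 + pCons 0 0) (Polynomial.smult x 1 + pCons 0 g)"
    using split[of g] by simp
  thus "\<phi> 0 (pCons x g) = x \<cdot>\<^sub>v \<phi> 0 1 + B *\<^sub>v \<phi> 0 g" by (simp only: phi_add phi_smult phi_shift)
qed

lemma B_pow_phi: "B ^\<^sub>m k *\<^sub>v \<phi> f g = \<phi> (tpow k * f) (tpow k * g)"
proof (induction k arbitrary: f g)
  case 0
  then show ?case using phi_carrier[of f g] B by (simp add: carrier_matD)
next
  case (Suc k)
  have "B ^\<^sub>m Suc k *\<^sub>v \<phi> f g = B ^\<^sub>m k *\<^sub>v (B *\<^sub>v \<phi> f g)"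
    using assoc_mult_mat_vec[OF pow_carrier_mat[OF B] B phi_carrier] by simp
  also have "\<dots> = \<phi> (tpow k * (tpow 1 * f)) (tpow k * (tpow 1 * g))"
    by (simp add: phi_shift Suc monom_Suc one_pCons)
  also have "\<dots> = \<phi> (tpow (Suc k) * f) (tpow (Suc k) * g)"
    by (simp add: mult.assoc[symmetric] mult_monom)
  finally show ?case .
qed

lemma three_vectors_independent:
  assumes pq: "q + 3 \<le> p" "1 \<le> q" and xy: "x \<noteq> 0 \<or> y \<noteq> 0"
    and comb: "\<xi> \<cdot>\<^sub>v \<phi> (tpow (p - 1)) 0 + \<eta> \<cdot>\<^sub>v \<phi> (tpow (p - 2)) 0
               + \<zeta> \<cdot>\<^sub>v \<phi> (monom x (p - 3)) (monom y (q - 1)) = 0\<^sub>v n"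
  shows "\<xi> = 0 \<and> \<eta> = 0 \<and> \<zeta> = 0"
proof -
  define F where "F = Polynomial.smult \<xi> (tpow (p - 1)) + Polynomial.smult \<eta> (tpow (p - 2))
    + Polynomial.smult \<zeta> (monom x (p - 3))"
  define G where "G = Polynomial.smult \<xi> 0 + Polynomial.smult \<eta> 0 + Polynomial.smult \<zeta> (monom y (q - 1))"
  have "\<phi> F G = 0\<^sub>v n" using comb unfolding F_def G_def by (simp only: phi_smult phi_add)
  hence F: "\<forall>k<p. coeff F k = 0" and G: "\<forall>k<q. coeff G k = 0"
    unfolding phi_eq_zero monom_1_dvd_iff' by auto
  have ex: "p - 1 < p" "p - 2 < p" "p - 3 < p" "p - 2 \<noteq> p - 1" "p - 3 \<noteq> p - 1" "p - 3 \<noteq> p - 2"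
    "q - 1 < q" using pq by auto
  have "coeff F (p - 1) = \<xi>" "coeff F (p - 2) = \<eta>" "coeff F (p - 3) = \<zeta> * x"
    "coeff G (q - 1) = \<zeta> * y" using ex by (simp_all add: F_def G_def coeff_monom)
  moreover have "coeff F (p - 1) = 0" "coeff F (p - 2) = 0" "coeff F (p - 3) = 0" "coeff G (q - 1) = 0"
    using F G ex by simp_all
  ultimately show ?thesis using xy by auto
qed

context
  fixes A :: "'a mat"
  assumes A: "A \<in> carrier_mat n n" and AB: "A * B = B * A"
begin

lemma A_B_pow_commute: "v \<in> carrier_vec n \<Longrightarrow> A *\<^sub>v (B ^\<^sub>m k *\<^sub>v v) = B ^\<^sub>m k *\<^sub>v (A *\<^sub>v v)"
proof -
  assume v: "v \<in> carrier_vec n"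
  have "A * B ^\<^sub>m k = B ^\<^sub>m k * A"
  proof (induction k)
    case (Suc k)
    have "A * B ^\<^sub>m Suc k = (A * B ^\<^sub>m k) * B"
      using assoc_mult_mat[OF A pow_carrier_mat[OF B] B] by simp
    also have "\<dots> = B ^\<^sub>m k * (A * B)"
      unfolding Suc using assoc_mult_mat[OF pow_carrier_mat[OF B] A B] by simp
    also have "\<dots> = B ^\<^sub>m Suc k * A"
      unfolding AB using assoc_mult_mat[OF pow_carrier_mat[OF B] B A] by simp
    finally show ?case .
  qed (use A B in auto)
  thus ?thesis using A B v by (metis assoc_mult_mat_vec pow_carrier_mat)
qed

context
  fixes a c s d :: "'a poly"
  assumes A_gen1: "A *\<^sub>v \<phi> 1 0 = \<phi> a c" and A_gen2: "A *\<^sub>v \<phi> 0 1 = \<phi> s d"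
begin

(* A is F[t]-linear, so it acts on coordinates through endo_step. *)
lemma A_phi: "A *\<^sub>v \<phi> f g = \<phi> (f * a + g * s) (f * c + g * d)"
proof -
  have A_B: "A *\<^sub>v (B *\<^sub>v v) = B *\<^sub>v (A *\<^sub>v v)" if "v \<in> carrier_vec n" for v
    using A_B_pow_commute[OF that, of 1] B by simp
  have phi00: "\<phi> 0 0 = 0\<^sub>v n" using phi_eq_zero by simp
  have left: "A *\<^sub>v \<phi> f 0 = \<phi> (f * a) (f * c)" for f
  proof (induction f rule: pCons_induct)
    case (pCons x f)
    have "A *\<^sub>v \<phi> (pCons x f) 0 = x \<cdot>\<^sub>v \<phi> a c + B *\<^sub>v \<phi> (f * a) (f * c)"
      unfolding phi_pCons using A B phi_carrier A_B pCons.IH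
      by (simp add: mult_add_distrib_mat_vec mult_mat_vec A_gen1)
    also have "\<dots> = \<phi> (Polynomial.smult x a + pCons 0 (f * a)) (Polynomial.smult x c + pCons 0 (f * c))"
      by (simp only: phi_add phi_smult phi_shift)
    finally show ?case by simp
  qed (use A phi00 in auto)
  have right: "A *\<^sub>v \<phi> 0 g = \<phi> (g * s) (g * d)" for g
  proof (induction g rule: pCons_induct)
    case (pCons x g)
    have "A *\<^sub>v \<phi> 0 (pCons x g) = x \<cdot>\<^sub>v \<phi> s d + B *\<^sub>v \<phi> (g * s) (g * d)"
      unfolding phi_pCons using A B phi_carrier A_B pCons.IH
      by (simp add: mult_add_distrib_mat_vec mult_mat_vec A_gen2)
    also have "\<dots> = \<phi> (Polynomial.smult x s + pCons 0 (g * s)) (Polynomial.smult x d + pCons 0 (g * d))"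
      by (simp only: phi_add phi_smult phi_shift)
    finally show ?case by simp
  qed (use A phi00 in auto)
  show ?thesis using phi_split[of f g] A phi_carrier
    by (simp add: mult_add_distrib_mat_vec left right phi_add)
qed

lemma A_pow_phi:
  "A ^\<^sub>m k *\<^sub>v \<phi> f g = \<phi> (fst ((endo_step a c s d ^^ k) (f, g))) (snd ((endo_step a c s d ^^ k) (f, g)))"
proof (induction k arbitrary: f g)
  case 0
  then show ?case using phi_carrier[of f g] A by (simp add: carrier_matD)
next
  case (Suc k)
  have "A ^\<^sub>m Suc k *\<^sub>v \<phi> f g = A ^\<^sub>m k *\<^sub>v (A *\<^sub>v \<phi> f g)"
    using assoc_mult_mat_vec[OF pow_carrier_mat[OF A] A phi_carrier] by simp
  then show ?case unfolding A_phi Suc funpow_Suc_right o_def by (simp add: endo_step_def)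
qed

(* Commutation: t^q \<cdot> (s, d) = 0 in the module, so t^(p-q) divides s. *)
lemma gen2_image_divisible:
  assumes "q \<le> p"
  shows "tpow (p - q) dvd s"
proof -
  have "\<phi> (tpow q * s) (tpow q * d) = B ^\<^sub>m q *\<^sub>v (A *\<^sub>v \<phi> 0 1)"
    by (simp add: A_gen2 B_pow_phi)
  also have "\<dots> = A *\<^sub>v (B ^\<^sub>m q *\<^sub>v \<phi> 0 1)" using A_B_pow_commute[OF phi_carrier] by simp
  also have "B ^\<^sub>m q *\<^sub>v \<phi> 0 1 = 0\<^sub>v n" unfolding B_pow_phi by (simp add: phi_eq_zero)
  finally have "\<phi> (tpow q * s) (tpow q * d) = 0\<^sub>v n" using A by auto
  hence "tpow (q + (p - q)) dvd tpow q * s" using phi_eq_zero assms by simp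
  thus ?thesis using tpow_dvd_mult_cancel by blast
qed

lemma diagonal_const_terms_zero:
  assumes nil: "A ^\<^sub>m N = 0\<^sub>m n n" and pq: "1 \<le> q" "1 \<le> p" and s0: "coeff s 0 = 0"
  shows "coeff a 0 = 0" "coeff d 0 = 0"
proof -
  have "A ^\<^sub>m N *\<^sub>v \<phi> 1 0 = 0\<^sub>v n" "A ^\<^sub>m N *\<^sub>v \<phi> 0 1 = 0\<^sub>v n"
    using nil phi_carrier by auto
  hence "tpow p dvd fst ((endo_step a c s d ^^ N) (1, 0))"
    "tpow q dvd snd ((endo_step a c s d ^^ N) (0, 1))"
    unfolding A_pow_phi phi_eq_zero by simp_all
  hence "coeff a 0 ^ N = 0" "coeff d 0 ^ N = 0"
    using pq endo_iter_const_first[OF s0] endo_iter_const_second[OF s0]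
    by (auto simp: monom_1_dvd_iff')
  thus "coeff a 0 = 0" "coeff d 0 = 0" by simp_all
qed

lemma A_pow_p_zero:
  assumes a0: "coeff a 0 = 0" and d0: "coeff d 0 = 0" and s: "tpow 2 dvd s" and qp: "q < p"
  shows "A ^\<^sub>m p = 0\<^sub>m n n"
proof (rule zero_matI[OF pow_carrier_mat[OF A]])
  fix v :: "'a vec" assume "v \<in> carrier_vec n"
  then obtain f g where v: "v = \<phi> f g" using phi_surj by blast
  have "tpow 1 dvd a" "tpow 1 dvd d" using a0 d0 by (auto simp: monom_1_dvd_iff')
  from endo_iter_divisible[OF this s, where k = p and x = "(f, g)" and c = c]
  have fst_ok: "tpow p dvd fst ((endo_step a c s d ^^ p) (f, g))"
    and "tpow (1 + (p - 1)) dvd tpow 1 * snd ((endo_step a c s d ^^ p) (f, g))"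
    using qp by auto
  hence "tpow (p - 1) dvd snd ((endo_step a c s d ^^ p) (f, g))" using tpow_dvd_mult_cancel by blast
  moreover have "q \<le> p - 1" using qp by simp
  ultimately have "tpow q dvd snd ((endo_step a c s d ^^ p) (f, g))" using tpow_dvd_mono by blast
  thus "A ^\<^sub>m p *\<^sub>v v = 0\<^sub>v n" unfolding v A_pow_phi using fst_ok phi_eq_zero by simp
qed

lemma A_pow_pred_nonzero:
  assumes a0: "coeff a 0 = 0" and a1: "coeff a 1 \<noteq> 0" and d0: "coeff d 0 = 0"
    and s: "tpow 3 dvd s" and p: "1 \<le> p"
  shows "A ^\<^sub>m (p - 1) \<noteq> 0\<^sub>m n n"
proof
  assume "A ^\<^sub>m (p - 1) = 0\<^sub>m n n"
  hence "A ^\<^sub>m (p - 1) *\<^sub>v \<phi> 1 0 = 0\<^sub>v n" using phi_carrier by auto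
  hence "tpow (Suc (p - 1)) dvd fst ((endo_step a c s d ^^ (p - 1)) (1, 0))"
    unfolding A_pow_phi phi_eq_zero using p by simp
  moreover have "tpow 1 dvd d" using d0 by (auto simp: monom_1_dvd_iff')
  ultimately show False using endo_iter_not_divisible[OF a0 _ s a1] by blast
qed

lemma A_kills_first_chain_top:
  assumes a: "tpow j dvd a" and jp: "j \<le> p" and qp: "q \<le> p - j"
  shows "A *\<^sub>v \<phi> (tpow (p - j)) 0 = 0\<^sub>v n"
proof -
  have "tpow (p - j + j) dvd tpow (p - j) * a" by (rule tpow_dvd_mult[OF dvd_refl a])
  hence "tpow p dvd tpow (p - j) * a" using jp by simp
  moreover have "tpow q dvd tpow (p - j) * c" using qp by (intro dvd_mult2 tpow_dvd_mono[OF _ dvd_refl])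
  ultimately show ?thesis unfolding A_phi using phi_eq_zero by simp
qed

(* If moreover a \<in> (t^2), a suitable combination of t^(p-3) e1 and t^(q-1) e2 is killed too:
   its only obstruction is the coefficient x \<alpha> + y \<sigma> of t^(p-1). *)
lemma A_kills_mixed_vector:
  assumes pq: "q + 3 \<le> p" "1 \<le> q"
    and a: "tpow 2 dvd a" and s: "tpow (p - q) dvd s" and d: "tpow 1 dvd d"
    and xy: "x * coeff a 2 + y * coeff s (p - q) = 0"
  shows "A *\<^sub>v \<phi> (monom x (p - 3)) (monom y (q - 1)) = 0\<^sub>v n"
proof -
  have "coeff (monom x (p - 3) * a + monom y (q - 1) * s) k = 0" if k: "k < p" for k
  proof (cases "k = p - 1")
    case True
    hence "k - (p - 3) = 2" "k - (q - 1) = p - q" "\<not> k < p - 3" "\<not> k < q - 1" using pq by auto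
    then show ?thesis using xy by (simp add: coeff_monom_mult)
  next
    case False
    hence "k - (p - 3) < 2" "k - (q - 1) < p - q" using k pq by auto
    then show ?thesis using a s by (simp add: coeff_monom_mult monom_1_dvd_iff')
  qed
  hence "tpow p dvd monom x (p - 3) * a + monom y (q - 1) * s" by (simp add: monom_1_dvd_iff')
  moreover have "tpow q dvd monom x (p - 3) * c"
    using pq by (intro dvd_mult2 tpow_dvd_mono[OF _ tpow_dvd_monom]) simp
  moreover have "tpow q dvd monom y (q - 1) * d"
    using tpow_dvd_mult[OF tpow_dvd_monom d, of "q - 1" y] pq by simp
  ultimately show ?thesis unfolding A_phi using phi_eq_zero by simp
qed

(* If A has at most two Jordan blocks, a must have a nonzero linear term: otherwise the
   three vectors above would span a 3-dimensional subspace of the kernel of A. *)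
lemma linear_coeff_nonzero:
  assumes pq: "q + 3 \<le> p" "1 \<le> q" and kd: "kernel_dim A \<le> 2"
    and a0: "coeff a 0 = 0" and s: "tpow (p - q) dvd s" and d: "tpow 1 dvd d"
  shows "coeff a 1 \<noteq> 0"
proof
  assume "coeff a 1 = 0"
  hence a: "tpow 2 dvd a" using a0 by (auto simp: monom_1_dvd_iff' less_2_cases_iff)
  define x where "x = (if coeff s (p - q) = 0 \<and> coeff a 2 = 0 then 0 else coeff s (p - q))"
  define y where "y = (if coeff s (p - q) = 0 \<and> coeff a 2 = 0 then 1 else - coeff a 2)"
  have xy: "x \<noteq> 0 \<or> y \<noteq> 0" "x * coeff a 2 + y * coeff s (p - q) = 0"
    by (auto simp: x_def y_def mult.commute)
  have "3 \<le> kernel_dim A"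
  proof (rule three_le_kernel_dim[OF A phi_carrier phi_carrier phi_carrier])
    show "A *\<^sub>v \<phi> (tpow (p - 1)) 0 = 0\<^sub>v n" "A *\<^sub>v \<phi> (tpow (p - 2)) 0 = 0\<^sub>v n"
      using A_kills_first_chain_top[of 1] A_kills_first_chain_top[OF a] a0 pq
      by (auto simp: monom_1_dvd_iff')
    show "A *\<^sub>v \<phi> (monom x (p - 3)) (monom y (q - 1)) = 0\<^sub>v n"
      using A_kills_mixed_vector[OF pq a s d xy(2)] .
  qed (use three_vectors_independent[OF pq xy(1)] in blast)
  with kd show False by simp
qed

end

end

lemma commuting_nilpotency_index:
  assumes pq: "q + 3 \<le> p" "1 \<le> q" and A: "A \<in> carrier_mat n n" and AB: "A * B = B * A"
    and nil: "A ^\<^sub>m N = 0\<^sub>m n n" and kd: "kernel_dim A \<le> 2"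
  shows "A ^\<^sub>m p = 0\<^sub>m n n \<and> A ^\<^sub>m (p - 1) \<noteq> 0\<^sub>m n n"
proof -
  obtain a c s d where gens: "A *\<^sub>v \<phi> 1 0 = \<phi> a c" "A *\<^sub>v \<phi> 0 1 = \<phi> s d"
    using phi_surj[OF mult_mat_vec_carrier[OF A phi_carrier]] by meson
  have s: "tpow (p - q) dvd s" using gen2_image_divisible[OF A AB gens] pq by simp
  have s2: "tpow 2 dvd s" "tpow 3 dvd s" using tpow_dvd_mono[OF _ s] pq by simp_all
  hence s0: "coeff s 0 = 0" by (simp add: monom_1_dvd_iff')
  have a0: "coeff a 0 = 0" and d0: "coeff d 0 = 0"
    using diagonal_const_terms_zero[OF A AB gens nil _ _ s0] pq by simp_all
  have d: "tpow 1 dvd d" using d0 by (auto simp: monom_1_dvd_iff')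
  have a1: "coeff a 1 \<noteq> 0" by (rule linear_coeff_nonzero[OF A AB gens pq kd a0 s d])
  show ?thesis
    using A_pow_p_zero[OF A AB gens a0 d0 s2(1)] A_pow_pred_nonzero[OF A AB gens a0 a1 d0 s2(2)] pq
    by simp
qed

end

lemma two_chains_swap:
  assumes "two_chains B n p q \<phi>"
  shows "two_chains B n q p (\<lambda>f g. \<phi> g f)"
proof -
  interpret two_chains B n p q \<phi> by fact
  show ?thesis
  proof unfold_locales
    show "\<exists>f g. v = \<phi> g f" if "v \<in> carrier_vec n" for v using phi_surj[OF that] by blast
  qed (auto simp: B phi_carrier phi_add phi_smult phi_shift phi_eq_zero)
qed

lemma jordan_matrix_two_index:
  assumes "i < r1 + r2" and "j < r1 + r2"
  shows "jordan_matrix [(r1, 0::'a::field), (r2, 0)] $$ (i, j) = (if Suc i = j \<and> j \<noteq> r1 then 1 else 0)"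
  using assms unfolding jordan_matrix_def by (auto simp: Let_def)

(* The coordinate vector of (f mod t^r1, g mod t^r2) in the Jordan basis: each block lists
   the coefficients of its polynomial from the top degree down. *)
definition chain_vec :: "nat \<Rightarrow> nat \<Rightarrow> 'a::field poly \<Rightarrow> 'a poly \<Rightarrow> 'a vec" where
  "chain_vec r1 r2 f g = vec (r1 + r2)
     (\<lambda>i. if i < r1 then coeff f (r1 - 1 - i) else coeff g (r2 - 1 - (i - r1)))"

lemma chain_vec_carrier: "chain_vec r1 r2 f g \<in> carrier_vec (r1 + r2)"
  by (simp add: chain_vec_def)

lemma jordan_matrix_two_mult_vec:
  assumes w: "w \<in> carrier_vec (r1 + r2)" and i: "i < r1 + r2"
  shows "(jordan_matrix [(r1, 0::'a::field), (r2, 0)] *\<^sub>v w) $ i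
    = (if Suc i < r1 + r2 \<and> Suc i \<noteq> r1 then w $ Suc i else 0)"
proof -
  let ?J = "jordan_matrix [(r1, 0::'a), (r2, 0)]"
  have "(?J *\<^sub>v w) $ i = (\<Sum>j\<in>{0..<r1 + r2}. row ?J i $ j * w $ j)"
    using i w by (simp add: scalar_prod_def)
  also have "\<dots> = (\<Sum>j\<in>{0..<r1 + r2}. if j = Suc i then (if Suc i \<noteq> r1 then w $ j else 0) else 0)"
    by (intro sum.cong refl) (use i in \<open>auto simp: jordan_matrix_two_index\<close>)
  also have "\<dots> = (if Suc i < r1 + r2 \<and> Suc i \<noteq> r1 then w $ Suc i else 0)"
    by (simp add: sum.delta')
  finally show ?thesis .
qed

lemma jordan_matrix_two_chain_vec:
  "jordan_matrix [(r1, 0::'a::field), (r2, 0)] *\<^sub>v chain_vec r1 r2 f g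
    = chain_vec r1 r2 (pCons 0 f) (pCons 0 g)"
proof (rule eq_vecI)
  fix i assume "i < dim_vec (chain_vec r1 r2 (pCons 0 f) (pCons 0 g))"
  hence i: "i < r1 + r2" by (simp add: chain_vec_def)
  have shift: "(jordan_matrix [(r1, 0::'a), (r2, 0)] *\<^sub>v chain_vec r1 r2 f g) $ i
      = (if Suc i < r1 + r2 \<and> Suc i \<noteq> r1 then chain_vec r1 r2 f g $ Suc i else 0)"
    by (rule jordan_matrix_two_mult_vec[OF chain_vec_carrier i])
  consider "Suc i = r1" | "Suc i = r1 + r2" | "i < r1" "Suc i \<noteq> r1"
    | "r1 \<le> i" "Suc i \<noteq> r1 + r2" by linarith
  then have "(if Suc i < r1 + r2 \<and> Suc i \<noteq> r1 then chain_vec r1 r2 f g $ Suc i else 0)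
      = chain_vec r1 r2 (pCons 0 f) (pCons 0 g) $ i"
  proof cases
    case 3
    hence "r1 - 1 - i = Suc (r1 - 1 - Suc i)" "Suc i < r1" by arith+
    then show ?thesis using i 3 by (simp add: chain_vec_def)
  next
    case 4
    hence "r2 - 1 - (i - r1) = Suc (r2 - 1 - (Suc i - r1))" "Suc i < r1 + r2" "Suc i \<noteq> r1"
      "\<not> Suc i < r1" using i by arith+
    then show ?thesis using i 4 by (simp add: chain_vec_def)
  qed (use i in \<open>auto simp: chain_vec_def\<close>)
  then show "(jordan_matrix [(r1, 0::'a), (r2, 0)] *\<^sub>v chain_vec r1 r2 f g) $ i
      = chain_vec r1 r2 (pCons 0 f) (pCons 0 g) $ i" unfolding shift .
qed (simp add: chain_vec_def)

lemma chain_vec_eq_zero_iff: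
  "chain_vec r1 r2 f g = 0\<^sub>v (r1 + r2) \<longleftrightarrow> tpow r1 dvd f \<and> tpow r2 dvd (g :: 'a::field poly)"
proof
  assume zero: "chain_vec r1 r2 f g = 0\<^sub>v (r1 + r2)"
  have "coeff f k = 0" if "k < r1" for k
    using arg_cong[OF zero, of "\<lambda>v. v $ (r1 - 1 - k)"] that by (simp add: chain_vec_def)
  moreover have "coeff g k = 0" if k: "k < r2" for k
  proof -
    have "r1 + (r2 - 1 - k) < r1 + r2" "\<not> r1 + (r2 - 1 - k) < r1" "r2 - 1 - (r1 + (r2 - 1 - k) - r1) = k"
      using k by auto
    thus ?thesis using arg_cong[OF zero, of "\<lambda>v. v $ (r1 + (r2 - 1 - k))"] by (simp add: chain_vec_def)
  qed
  ultimately show "tpow r1 dvd f \<and> tpow r2 dvd g" by (simp add: monom_1_dvd_iff')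
next
  assume "tpow r1 dvd f \<and> tpow r2 dvd g"
  thus "chain_vec r1 r2 f g = 0\<^sub>v (r1 + r2)"
    by (intro eq_vecI) (auto simp: chain_vec_def monom_1_dvd_iff')
qed

lemma chain_vec_surj:
  assumes u: "u \<in> carrier_vec (r1 + r2)"
  shows "\<exists>f g. u = chain_vec r1 r2 f (g :: 'a::field poly)"
proof -
  define f where "f = Poly (map (\<lambda>k. u $ (r1 - 1 - k)) [0..<r1])"
  define g where "g = Poly (map (\<lambda>k. u $ (r1 + (r2 - 1 - k))) [0..<r2])"
  have "u $ i = chain_vec r1 r2 f g $ i" if i: "i < r1 + r2" for i
  proof (cases "i < r1")
    case True
    define j where "j = r1 - 1 - i"
    have "r1 - 1 - j = i" "j < r1" using True by (simp_all add: j_def)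
    hence "coeff f j = u $ i" by (simp add: f_def nth_default_nth)
    thus ?thesis using True i by (simp add: chain_vec_def j_def)
  next
    case False
    define j where "j = r2 - 1 - (i - r1)"
    have "r1 + (r2 - 1 - j) = i" "j < r2" using False i by (simp_all add: j_def)
    hence "coeff g j = u $ i" by (simp add: g_def nth_default_nth)
    thus ?thesis using False i by (simp add: chain_vec_def j_def)
  qed
  hence "u = chain_vec r1 r2 f g" using u by (intro eq_vecI) (auto simp: chain_vec_def)
  thus ?thesis by blast
qed

lemma similar_mat_wit_mult_vec:
  assumes wit: "similar_mat_wit B J P Q" and B: "B \<in> carrier_mat n n" and w: "w \<in> carrier_vec n"
  shows "B *\<^sub>v (P *\<^sub>v w) = P *\<^sub>v (J *\<^sub>v w)" and "Q *\<^sub>v (P *\<^sub>v w) = w"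
proof -
  note W = similar_mat_witD2[OF B wit]
  have Pw: "P *\<^sub>v w \<in> carrier_vec n" using W(6) w by simp
  have "Q *\<^sub>v (P *\<^sub>v w) = (Q * P) *\<^sub>v w" by (rule assoc_mult_mat_vec[OF W(7,6) w, symmetric])
  then show inv: "Q *\<^sub>v (P *\<^sub>v w) = w" using W(2) w by simp
  have "B *\<^sub>v (P *\<^sub>v w) = (P * J) *\<^sub>v (Q *\<^sub>v (P *\<^sub>v w))"
    unfolding W(3) using assoc_mult_mat_vec[OF mult_carrier_mat[OF W(6,5)] W(7) Pw] .
  also have "\<dots> = P *\<^sub>v (J *\<^sub>v w)" unfolding inv using assoc_mult_mat_vec[OF W(6,5) w] .
  finally show "B *\<^sub>v (P *\<^sub>v w) = P *\<^sub>v (J *\<^sub>v w)" .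
qed

(* A matrix in Jordan form with two nilpotent blocks of sizes r1, r2 is modelled by two
   chains: \<phi> f g = P (chain_vec f g), where P conjugates B to the Jordan matrix. *)
lemma jordan_two_blocks_chains:
  fixes B :: "'a::field mat"
  assumes jnf: "jordan_nf B [(r1, 0), (r2, 0)]" and B: "B \<in> carrier_mat n n"
  shows "\<exists>\<phi>. two_chains B n r1 r2 \<phi>"
proof -
  let ?J = "jordan_matrix [(r1, 0::'a), (r2, 0)]"
  from jnf obtain P Q where wit: "similar_mat_wit B ?J P Q"
    unfolding jordan_nf_def similar_mat_def by blast
  note W = similar_mat_witD2[OF B wit]
  have "dim_row ?J = n" using W(5) by (rule carrier_matD)
  hence n: "n = r1 + r2" by simp
  have wc: "chain_vec r1 r2 f g \<in> carrier_vec n" for f g using chain_vec_carrier n by simp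
  note inv = similar_mat_wit_mult_vec(2)[OF wit B wc]
  have "two_chains B n r1 r2 (\<lambda>f g. P *\<^sub>v chain_vec r1 r2 f g)"
  proof unfold_locales
    show "P *\<^sub>v chain_vec r1 r2 (f + h) (g + k) = P *\<^sub>v chain_vec r1 r2 f g + P *\<^sub>v chain_vec r1 r2 h k"
      for f g h k :: "'a poly"
    proof -
      have "chain_vec r1 r2 (f + h) (g + k) = chain_vec r1 r2 f g + chain_vec r1 r2 h k"
        by (intro eq_vecI) (auto simp: chain_vec_def)
      thus ?thesis using mult_add_distrib_mat_vec[OF W(6) wc wc] by simp
    qed
    show "P *\<^sub>v chain_vec r1 r2 (Polynomial.smult c f) (Polynomial.smult c g)
      = c \<cdot>\<^sub>v (P *\<^sub>v chain_vec r1 r2 f g)" for c f g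
    proof -
      have "chain_vec r1 r2 (Polynomial.smult c f) (Polynomial.smult c g) = c \<cdot>\<^sub>v chain_vec r1 r2 f g"
        by (intro eq_vecI) (auto simp: chain_vec_def)
      thus ?thesis using mult_mat_vec[OF W(6) wc] by simp
    qed
    show "B *\<^sub>v (P *\<^sub>v chain_vec r1 r2 f g) = P *\<^sub>v chain_vec r1 r2 (pCons 0 f) (pCons 0 g)" for f g
      unfolding similar_mat_wit_mult_vec(1)[OF wit B wc] jordan_matrix_two_chain_vec ..
    show "P *\<^sub>v chain_vec r1 r2 f g = 0\<^sub>v n \<longleftrightarrow> tpow r1 dvd f \<and> tpow r2 dvd g" for f g
    proof -
      have "Q *\<^sub>v 0\<^sub>v n = 0\<^sub>v n" using W(7) by auto
      hence "P *\<^sub>v chain_vec r1 r2 f g = 0\<^sub>v n \<longleftrightarrow> chain_vec r1 r2 f g = 0\<^sub>v n"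
        using inv[of f g] W(6) by auto
      thus ?thesis using chain_vec_eq_zero_iff[of r1 r2 f g] n by simp
    qed
    show "\<exists>f g. v = P *\<^sub>v chain_vec r1 r2 f g" if v: "v \<in> carrier_vec n" for v
    proof -
      have "Q *\<^sub>v v \<in> carrier_vec (r1 + r2)" using W(7) v n by simp
      from chain_vec_surj[OF this] obtain f g where fg: "Q *\<^sub>v v = chain_vec r1 r2 f g" by blast
      have "P *\<^sub>v (Q *\<^sub>v v) = (P * Q) *\<^sub>v v"
        by (rule assoc_mult_mat_vec[OF W(6,7) v, symmetric])
      also have "\<dots> = v" using W(1) v by simp
      finally show ?thesis unfolding fg by metis
    qed
    show "P *\<^sub>v chain_vec r1 r2 f g \<in> carrier_vec n" for f g
      using mult_mat_vec_carrier[OF W(6) wc] .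
  qed (rule B)
  thus ?thesis by blast
qed

lemma jordan_matrix_two_pow_zero:
  assumes "r1 \<le> k" "r2 \<le> k"
  shows "jordan_matrix [(r1, 0::'a::field), (r2, 0)] ^\<^sub>m k = 0\<^sub>m (r1 + r2) (r1 + r2)"
proof -
  have zero: "jordan_block m (0::'a) ^\<^sub>m k = 0\<^sub>m m m" if "m \<le> k" for m
    unfolding jordan_block_zero_pow using that by (intro eq_matI) auto
  have "jordan_matrix [(r1, 0::'a), (r2, 0)] ^\<^sub>m k = diag_block_mat [0\<^sub>m r1 r1, 0\<^sub>m r2 r2]"
    unfolding jordan_matrix_pow using zero assms by simp
  also have "\<dots> = 0\<^sub>m (r1 + r2) (r1 + r2)" by (intro eq_matI) (auto simp: Let_def)
  finally show ?thesis .
qed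

lemma jordan_nf_kernel_dim_pow:
  assumes X: "X \<in> carrier_mat n n" and jnf: "jordan_nf (X :: 'a::field mat) n_as"
  shows "kernel_dim (X ^\<^sub>m k) = (\<Sum>m \<leftarrow> map fst [(m, e) \<leftarrow> n_as. e = 0]. min k m)"
proof -
  have "char_matrix X 0 = X" using X unfolding char_matrix_def by (intro eq_matI) auto
  thus ?thesis using dim_gen_eigenspace[OF jnf, of 0 k] unfolding dim_gen_eigenspace_def by simp
qed

lemma jordan_shape_two_blocks:
  fixes X :: "'a::field mat"
  assumes X: "X \<in> carrier_mat n n" and nil: "nilpotent_mat X" and sh: "jordan_shape X {#x1, x2#}"
  shows "n = x1 + x2 \<and> 1 \<le> x1 \<and> 1 \<le> x2 \<and>
    (jordan_nf X [(x1, 0), (x2, 0)] \<or> jordan_nf X [(x2, 0), (x1, 0)])"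
proof -
  obtain n_as where jnf: "jordan_nf X n_as" and ms: "mset (map fst n_as) = {#x1, x2#}"
    using sh unfolding jordan_shape_def by blast
  have "length n_as = 2" using arg_cong[OF ms, of size] by simp
  then obtain y1 e1 y2 e2 where nas: "n_as = [(y1, e1), (y2, e2)]"
    by (auto simp: numeral_2_eq_2 length_Suc_conv)
  from ms nas have yx: "(y1 = x1 \<and> y2 = x2) \<or> (y1 = x2 \<and> y2 = x1)"
    by (auto simp: add_eq_conv_ex)
  from jnf nas have y: "1 \<le> y1" "1 \<le> y2" unfolding jordan_nf_def by auto
  from jnf obtain P Q where "similar_mat_wit X (jordan_matrix n_as) P Q"
    unfolding jordan_nf_def similar_mat_def by blast
  hence "dim_row (jordan_matrix n_as) = n" using similar_mat_witD2(5)[OF X] carrier_matD by blast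
  hence n: "n = y1 + y2" using nas by simp
  obtain K where "X ^\<^sub>m K = 0\<^sub>m n n" using nil X unfolding nilpotent_mat_def by auto
  hence "X ^\<^sub>m (K + n) = 0\<^sub>m n n" using pow_zero_mono[OF X] by simp
  hence "n = (\<Sum>m \<leftarrow> map fst [(m, e) \<leftarrow> n_as. e = 0]. min (K + n) m)"
    using jordan_nf_kernel_dim_pow[OF X jnf, of "K + n"] by (simp add: kernel_dim_zero_mat)
  hence "e1 = 0 \<and> e2 = 0" using n y nas by (auto split: if_splits)
  thus ?thesis using jnf nas yx y n by auto
qed

lemma jordan_nf_two_blocks_facts:
  fixes X :: "'a::field mat"
  assumes X: "X \<in> carrier_mat n n" and jnf: "jordan_nf X [(y1, 0), (y2, 0)]" and n: "n = y1 + y2"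
  shows "kernel_dim (X ^\<^sub>m k) = min k y1 + min k y2"
    and "y1 \<le> k \<Longrightarrow> y2 \<le> k \<Longrightarrow> X ^\<^sub>m k = 0\<^sub>m n n"
proof -
  show "kernel_dim (X ^\<^sub>m k) = min k y1 + min k y2"
    using jordan_nf_kernel_dim_pow[OF X jnf] by simp
  assume k: "y1 \<le> k" "y2 \<le> k"
  obtain P Q where P: "P \<in> carrier_mat n n" and Q: "Q \<in> carrier_mat n n"
    and pow: "\<And>k. X ^\<^sub>m k = P * jordan_matrix [(y1, 0), (y2, 0)] ^\<^sub>m k * Q"
    using jordan_nf_powE[OF X jnf] by metis
  have "X ^\<^sub>m k = P * jordan_matrix [(y1, 0), (y2, 0)] ^\<^sub>m k * Q" by (rule pow)
  also have "jordan_matrix [(y1, 0::'a), (y2, 0)] ^\<^sub>m k = 0\<^sub>m n n"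
    using jordan_matrix_two_pow_zero[OF k] n by simp
  also have "P * 0\<^sub>m n n * Q = 0\<^sub>m n n" using P Q by simp
  finally show "X ^\<^sub>m k = 0\<^sub>m n n" .
qed

lemma jordan_shape_two_blocks_facts:
  fixes X :: "'a::field mat"
  assumes X: "X \<in> carrier_mat n n" and "nilpotent_mat X" and "jordan_shape X {#x1, x2#}"
  shows "n = x1 + x2" "1 \<le> x1" "1 \<le> x2"
    and "kernel_dim (X ^\<^sub>m k) = min k x1 + min k x2"
    and "x1 \<le> k \<Longrightarrow> x2 \<le> k \<Longrightarrow> X ^\<^sub>m k = 0\<^sub>m n n"
  using jordan_shape_two_blocks[OF assms] jordan_nf_two_blocks_facts[OF X]
  by (auto simp: add.commute)

section \<open>The largest block of a commuting nilpotent matrix\<close>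

lemma commuting_largest_block:
  fixes B A :: "'a::field mat"
  assumes B: "B \<in> carrier_mat n n" and A: "A \<in> carrier_mat n n" and BA: "B * A = A * B"
    and nB: "nilpotent_mat B" and nA: "nilpotent_mat A"
    and sB: "jordan_shape B {#p, q#}" and sA: "jordan_shape A {#m1, m2#}"
    and pq: "q + 3 \<le> p" and m: "m2 \<le> m1"
  shows "m1 = p"
proof -
  note shapeA = jordan_shape_two_blocks_facts[OF A nA sA]
  have q: "1 \<le> q" using jordan_shape_two_blocks_facts(3)[OF B nB sB] .
  have "\<exists>\<phi>. two_chains B n p q \<phi>"
  proof (cases "jordan_nf B [(p, 0), (q, 0)]")
    case True
    then show ?thesis by (rule jordan_two_blocks_chains[OF _ B])
  next
    case False
    hence "jordan_nf B [(q, 0), (p, 0)]" using jordan_shape_two_blocks[OF B nB sB] by blast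
    then obtain \<psi> where "two_chains B n q p \<psi>" using jordan_two_blocks_chains[OF _ B] by blast
    thus ?thesis using two_chains_swap by blast
  qed
  then obtain \<phi> where chains: "two_chains B n p q \<phi>" by blast
  have "kernel_dim A \<le> 2" using shapeA(4)[of 1] A by simp
  moreover obtain N where "A ^\<^sub>m N = 0\<^sub>m n n" using nA A unfolding nilpotent_mat_def by auto
  ultimately have index: "A ^\<^sub>m p = 0\<^sub>m n n" "A ^\<^sub>m (p - 1) \<noteq> 0\<^sub>m n n"
    using two_chains.commuting_nilpotency_index[OF chains _ q A BA[symmetric]] pq by blast+
  have "kernel_dim (A ^\<^sub>m p) = n" using index(1) by (simp add: kernel_dim_zero_mat)
  hence "min p m1 + min p m2 = m1 + m2" using shapeA(1) shapeA(4)[of p] by simp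
  moreover have "\<not> m1 \<le> p - 1" using shapeA(5)[of "p - 1"] index(2) m by auto
  ultimately show "m1 = p" by linarith
qed

lemma jordan_matrix_two_shape:
  assumes "1 \<le> b" "b \<le> a"
  defines "J \<equiv> jordan_matrix [(a, 0::'a::field), (b, 0)]"
  shows "J \<in> carrier_mat (a + b) (a + b) \<and> nilpotent_mat J \<and> jordan_shape J {#a, b#}"
proof -
  have J: "J \<in> carrier_mat (a + b) (a + b)" unfolding J_def using jordan_matrix_carrier[of "[(a, 0::'a), (b, 0)]"] by simp
  moreover have "J ^\<^sub>m a = 0\<^sub>m (a + b) (a + b)"
    unfolding J_def by (rule jordan_matrix_two_pow_zero) (use assms in auto)
  hence "nilpotent_mat J" unfolding nilpotent_mat_def using J by auto
  moreover have "jordan_nf J [(a, 0), (b, 0)]"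
    unfolding jordan_nf_def J_def using assms similar_mat_refl[OF J[unfolded J_def]] by auto
  hence "jordan_shape J {#a, b#}" unfolding jordan_shape_def by (intro exI[of _ "[(a, 0), (b, 0)]"]) simp
  ultimately show ?thesis by simp
qed

(* Commuting nilpotent matrices of two-block shapes {l1, l2} and {m1, m2}, where l1 - l2 is
   1 or at least 3, have the same shape: apply commuting_largest_block to (B, A) if
   l1 - l2 \<ge> 3, to (A, B) if m1 - m2 \<ge> 3, and use parity otherwise. *)
lemma commuting_two_block_shapes_equal:
  fixes B A :: "'a::field mat"
  assumes B: "B \<in> carrier_mat n n" and A: "A \<in> carrier_mat n n" and BA: "B * A = A * B"
    and nil: "nilpotent_mat B" "nilpotent_mat A"
    and sh: "jordan_shape B {#l1, l2#}" "jordan_shape A {#m1, m2#}"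
    and l: "l2 \<le> l1" "l1 - l2 = 1 \<or> 3 \<le> l1 - l2" and m: "m2 \<le> m1"
  shows "m1 = l1 \<and> m2 = l2"
proof -
  have n: "n = l1 + l2" "n = m1 + m2"
    using jordan_shape_two_blocks_facts(1)[OF B nil(1) sh(1)]
      jordan_shape_two_blocks_facts(1)[OF A nil(2) sh(2)] by simp_all
  consider "l2 + 3 \<le> l1" | "m2 + 3 \<le> m1" | "l1 = l2 + 1" "m1 \<le> m2 + 2" using l by linarith
  hence "m1 = l1"
  proof cases
    case 1
    then show ?thesis by (rule commuting_largest_block[OF B A BA nil sh]) (use m in simp)
  next
    case 2
    then have "l1 = m1" by (rule commuting_largest_block[OF A B BA[symmetric] nil(2,1) sh(2,1) _ l(1)])
    then show ?thesis ..
  next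
    case 3
    (* m1 - m2 \<le> 2 while m1 + m2 = 2 l2 + 1 is odd, so m1 = m2 + 1 = l1. *)
    hence "m1 = m2 \<or> m1 = m2 + 1 \<or> m1 = m2 + 2" using m by auto
    then show ?thesis using 3 n by auto
  qed
  thus ?thesis using n by simp
qed

theorem lemma3p3:
  fixes l1 l2 m1 m2 n :: nat
  assumes "l1 \<ge> l2" and "l2 \<ge> 1" and "l1 - l2 = 1 \<or> l1 - l2 \<ge> 3" and "n = l1 + l2"
    and "m1 \<ge> m2" and "m2 \<ge> 1" and "m1 + m2 = n"
  shows "(\<exists>B A :: 'a :: {alg_closed_field, field_char_0} mat.
            B \<in> carrier_mat n n \<and> A \<in> carrier_mat n n \<and> B * A = A * B \<and>
            nilpotent_mat B \<and> nilpotent_mat A \<and>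
            jordan_shape B {#l1, l2#} \<and> jordan_shape A {#m1, m2#})
         \<longleftrightarrow> (m1, m2) = (l1, l2)"
    (is "(\<exists>B A. ?commuting B A) \<longleftrightarrow> _")
proof
  assume "\<exists>B A. ?commuting B A"
  then obtain B A :: "'a mat" where "?commuting B A" by blast
  thus "(m1, m2) = (l1, l2)"
    using commuting_two_block_shapes_equal[of B n A l1 l2 m1 m2] assms by auto
next
  assume "(m1, m2) = (l1, l2)"
  hence m: "m1 = l1" "m2 = l2" by simp_all
  have "jordan_matrix [(l1, 0::'a), (l2, 0)] \<in> carrier_mat (l1 + l2) (l1 + l2) \<and>
      nilpotent_mat (jordan_matrix [(l1, 0::'a), (l2, 0)]) \<and>
      jordan_shape (jordan_matrix [(l1, 0::'a), (l2, 0)]) {#l1, l2#}"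
    by (rule jordan_matrix_two_shape) (use assms in simp_all)
  thus "\<exists>B A. ?commuting B A" unfolding m assms(4) by blast
qed

end
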